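(* Let $n\ge2$ and let $X_1,\dots,X_n$ be i.i.d. real random variables. For $N\in\mathbb{N}$ let $g_0,\dots,g_N:\mathbb{R}\to\mathbb{R}$ be functions such that each $g_\ell(X_j)$ is almost surely bounded. Let $\mu_\ell=\mathbb{E}(g_\ell(X_1))$, $\theta=\sum_{\ell=0}^N\mu_\ell^2$, and $$U_n=\frac{2}{n(n-1)}\sum_{\ell=0}^N\sum_{1\le j<j'\le n}g_\ell(X_j)g_\ell(X_{j'}).$$ For $j=1,\dots,n$ define $$W_j=2\sum_{\ell=0}^N\Big(\mu_\ell\big(g_\ell(X_j)-\mu_\ell\big)-\frac{(g_\ell(X_j)-\mu_\ell)^2}{n-1}\Big).$$ Let $a_W,b_W$ be real numbers with $a_W\le W_j\le b_W$ almost surely, and $\delta_W=|\mathbb{E}(W_j)|$. Then for all $t>0$, $$\mathbb{P}\big(U_n-\theta<-(t+\delta_W)\big)\le\exp\Big(-\frac{2nt^2}{(b_W-a_W)^2}\Big).$$ *)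

theory Defs
  imports "HOL-Probability.Probability"
begin

definition U_stat :: "nat \<Rightarrow> nat \<Rightarrow> (nat \<Rightarrow> real \<Rightarrow> real) \<Rightarrow> (nat \<Rightarrow> 'a \<Rightarrow> real) \<Rightarrow> 'a \<Rightarrow> real" where
  "U_stat n N g X \<omega> = 2 / (real n * (real n - 1)) *
     (\<Sum>l\<in>{0..N}. \<Sum>j\<in>{1..n}. \<Sum>j'\<in>{j+1..n}. g l (X j \<omega>) * g l (X j' \<omega>))"

definition W_var :: "nat \<Rightarrow> nat \<Rightarrow> (nat \<Rightarrow> real \<Rightarrow> real) \<Rightarrow> (nat \<Rightarrow> real) \<Rightarrow> (nat \<Rightarrow> 'a \<Rightarrow> real) \<Rightarrow> nat \<Rightarrow> 'a \<Rightarrow> real" where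
  "W_var n N g \<mu> X j \<omega> = 2 * (\<Sum>l\<in>{0..N}.
     \<mu> l * (g l (X j \<omega>) - \<mu> l) - (g l (X j \<omega>) - \<mu> l)^2 / (real n - 1))"

end

theory Submission
  imports Defs
begin

(*
  For a single index l, write f j = g l (X j) and m = \<mu> l. The pair sum in the U-statistic
  is ((\<Sum>j. f j)\<^sup>2 - (\<Sum>j. (f j)\<^sup>2)) / 2, and expanding around m shows that this part of
  U_n minus m\<^sup>2 exceeds the corresponding part of the average of the W_j by
  ((\<Sum>j. f j - m)\<^sup>2 + (\<Sum>j. (f j - m)\<^sup>2)) / (n (n - 1)) \<ge> 0. Hence U_n - \<theta> is bounded
  below pointwise by the mean of the W_j, which are i.i.d. and bounded as functions of the X_j,
  so Hoeffding's inequality for their mean gives the lower-tail bound; \<delta>_W absorbs the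
  possibly nonzero expectation of W_j.
*)

lemma sum_pairs_eq:
  fixes f :: "nat \<Rightarrow> 'a::comm_ring_1"
  shows "2 * (\<Sum>j\<in>{1..n}. \<Sum>j'\<in>{j+1..n}. f j * f j')
           = (\<Sum>j\<in>{1..n}. f j)\<^sup>2 - (\<Sum>j\<in>{1..n}. (f j)\<^sup>2)"
proof (induction n)
  case 0
  then show ?case by simp
next
  case (Suc n)
  have "(\<Sum>j\<in>{1..Suc n}. \<Sum>j'\<in>{j+1..Suc n}. f j * f j')
          = (\<Sum>j\<in>{1..n}. (\<Sum>j'\<in>{j+1..n}. f j * f j') + f j * f (Suc n))"
    by (simp add: sum.atLeast_Suc_atMost_Suc_shift)
  also have "\<dots> = (\<Sum>j\<in>{1..n}. \<Sum>j'\<in>{j+1..n}. f j * f j') + (\<Sum>j\<in>{1..n}. f j) * f (Suc n)"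
    by (simp add: sum.distrib sum_distrib_right)
  finally show ?case
    using Suc by (simp add: power2_eq_square algebra_simps)
qed

lemma pair_average_minus_square_ge:
  fixes f :: "nat \<Rightarrow> real" and m :: real
  assumes "n \<ge> 2"
  shows "(\<Sum>j\<in>{1..n}. 2 * (m * (f j - m) - (f j - m)\<^sup>2 / (real n - 1))) / real n
           \<le> 2 / (real n * (real n - 1)) * (\<Sum>j\<in>{1..n}. \<Sum>j'\<in>{j+1..n}. f j * f j') - m\<^sup>2"
proof -
  define S where "S = (\<Sum>j\<in>{1..n}. f j)"
  define Q where "Q = (\<Sum>j\<in>{1..n}. (f j)\<^sup>2)"
  define D where "D = (\<Sum>j\<in>{1..n}. (f j - m)\<^sup>2)"
  have n: "real n > 0" "real n - 1 > 0"
    using assms by auto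
  have pairs: "(\<Sum>j\<in>{1..n}. \<Sum>j'\<in>{j+1..n}. f j * f j') = (S\<^sup>2 - Q) / 2"
    using sum_pairs_eq[of f n] by (simp add: S_def Q_def)
  have D_eq: "D = Q - 2 * m * S + n * m\<^sup>2"
    by (simp add: D_def S_def Q_def sum.distrib sum_subtractf sum_distrib_left
        power2_eq_square algebra_simps)
  have terms: "(\<Sum>j\<in>{1..n}. 2 * (m * (f j - m) - (f j - m)\<^sup>2 / (real n - 1)))
                 = 2 * m * (S - n * m) - 2 * D / (real n - 1)"
  proof -
    have "(\<Sum>j\<in>{1..n}. f j - m) = S - n * m"
      by (simp add: S_def sum_subtractf)
    then show ?thesis
      by (simp add: D_def sum_subtractf sum_distrib_left[symmetric]
          sum_divide_distrib[symmetric] right_diff_distrib)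
  qed
  have "2 / (real n * (real n - 1)) * ((S\<^sup>2 - Q) / 2) - m\<^sup>2
          - (2 * m * (S - n * m) - 2 * D / (real n - 1)) / real n
          = ((S - n * m)\<^sup>2 + D) / (real n * (real n - 1))"
    using n unfolding D_eq by (simp add: divide_simps) (simp add: power2_eq_square algebra_simps)
  moreover have "0 \<le> ((S - n * m)\<^sup>2 + D) / (real n * (real n - 1))"
    using n by (simp add: D_def sum_nonneg)
  ultimately show ?thesis
    unfolding pairs terms by linarith
qed

lemma sum_W_var_div_le_U_stat:
  assumes "n \<ge> 2"
  shows "(\<Sum>j\<in>{1..n}. W_var n N g \<mu> X j \<omega>) / real n
           \<le> U_stat n N g X \<omega> - (\<Sum>l\<in>{0..N}. (\<mu> l)\<^sup>2)"
proof -
  have "(\<Sum>j\<in>{1..n}. W_var n N g \<mu> X j \<omega>) / real n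
          = (\<Sum>l\<in>{0..N}. (\<Sum>j\<in>{1..n}. 2 * (\<mu> l * (g l (X j \<omega>) - \<mu> l)
                 - (g l (X j \<omega>) - \<mu> l)\<^sup>2 / (real n - 1))) / real n)"
    unfolding W_var_def sum_distrib_left sum_divide_distrib[symmetric]
    by (subst sum.swap) simp
  also have "\<dots> \<le> (\<Sum>l\<in>{0..N}. 2 / (real n * (real n - 1))
                   * (\<Sum>j\<in>{1..n}. \<Sum>j'\<in>{j+1..n}. g l (X j \<omega>) * g l (X j' \<omega>)) - (\<mu> l)\<^sup>2)"
    by (intro sum_mono pair_average_minus_square_ge assms)
  also have "\<dots> = U_stat n N g X \<omega> - (\<Sum>l\<in>{0..N}. (\<mu> l)\<^sup>2)"
    by (simp add: U_stat_def sum_subtractf sum_distrib_left)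
  finally show ?thesis .
qed

lemma (in prob_space) Hoeffding_ineq_iid_comp_le:
  fixes X :: "'i \<Rightarrow> 'a \<Rightarrow> 'b" and h :: "'b \<Rightarrow> real" and a b t :: real
  assumes "finite I" and "i\<^sub>0 \<in> I"
    and indep: "indep_vars (\<lambda>_. N) X I"
    and ident: "\<And>i. i \<in> I \<Longrightarrow> distr M N (X i) = distr M N (X i\<^sub>0)"
    and h: "h \<in> borel_measurable N"
    and bounds: "AE \<omega> in M. h (X i\<^sub>0 \<omega>) \<in> {a..b}"
    and "t \<ge> 0"
  shows "prob {\<omega> \<in> space M. (\<Sum>i\<in>I. h (X i \<omega>)) / card I \<le> expectation (\<lambda>\<omega>. h (X i\<^sub>0 \<omega>)) - t}
           \<le> exp (- (2 * real (card I) * t\<^sup>2) / (b - a)\<^sup>2)"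
proof (cases "a = b")
  case True
  \<comment> \<open>Then the bound is exp 0 = 1, since division by zero yields 0.\<close>
  then show ?thesis
    by simp
next
  case False
  have X: "X i \<in> measurable M N" if "i \<in> I" for i
    using indep that unfolding indep_vars_def by blast
  have "AE \<omega> in M. a \<le> b"
    using bounds by eventually_elim auto
  with False have "a < b"
    by simp
  have indep_h: "indep_vars (\<lambda>_. borel) (\<lambda>i \<omega>. h (X i \<omega>)) I"
    using h by (intro indep_vars_compose2[OF indep]) simp
  have distr_h: "distr M borel (\<lambda>\<omega>. h (X i \<omega>)) = distr M borel (\<lambda>\<omega>. h (X i\<^sub>0 \<omega>))" if "i \<in> I" for i
    using distr_distr[OF h X[OF that]] distr_distr[OF h X[OF \<open>i\<^sub>0 \<in> I\<close>]] ident[OF that]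
    by (simp add: comp_def)
  have rv_h: "random_variable borel (\<lambda>\<omega>. h (X i\<^sub>0 \<omega>))"
    using measurable_comp[OF X[OF \<open>i\<^sub>0 \<in> I\<close>] h] by (simp add: comp_def)
  interpret Hoeffding_ineq_iid M I "\<lambda>i \<omega>. h (X i \<omega>)" "\<lambda>\<omega>. h (X i\<^sub>0 \<omega>)" a b
      "expectation (\<lambda>\<omega>. h (X i\<^sub>0 \<omega>))"
    by unfold_locales (rule \<open>finite I\<close> indep_h distr_h rv_h bounds refl | assumption)+
  have "I \<noteq> {}"
    using \<open>i\<^sub>0 \<in> I\<close> by blast
  show ?thesis
    using Hoeffding_ineq_le'[OF \<open>t \<ge> 0\<close> \<open>a < b\<close> \<open>I \<noteq> {}\<close>] by simp
qed

theorem lemma1: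
  fixes M :: "'a measure" and X :: "nat \<Rightarrow> 'a \<Rightarrow> real" and g :: "nat \<Rightarrow> real \<Rightarrow> real"
    and n N :: nat and aW bW t :: real
  assumes "prob_space M"
    and n2: "n \<ge> 2"
    and rv: "\<And>j. j \<in> {1..n} \<Longrightarrow> X j \<in> borel_measurable M"
    and indep: "prob_space.indep_vars M (\<lambda>_. borel) X {1..n}"
    and ident: "\<And>j. j \<in> {1..n} \<Longrightarrow> distr M borel (X j) = distr M borel (X 1)"
    and gmeas: "\<And>l. l \<in> {0..N} \<Longrightarrow> g l \<in> borel_measurable borel"
    and gbdd: "\<And>l j. l \<in> {0..N} \<Longrightarrow> j \<in> {1..n} \<Longrightarrow>
                 \<exists>B. AE \<omega> in M. \<bar>g l (X j \<omega>)\<bar> \<le> B"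
    and Wbdd: "\<And>j. j \<in> {1..n} \<Longrightarrow>
       AE \<omega> in M. aW \<le> W_var n N g (\<lambda>l. prob_space.expectation M (\<lambda>\<omega>. g l (X 1 \<omega>))) X j \<omega>
                 \<and> W_var n N g (\<lambda>l. prob_space.expectation M (\<lambda>\<omega>. g l (X 1 \<omega>))) X j \<omega> \<le> bW"
    and t: "t > 0"
  shows
   "let \<mu> = (\<lambda>l. prob_space.expectation M (\<lambda>\<omega>. g l (X 1 \<omega>)));
        \<theta> = (\<Sum>l\<in>{0..N}. (\<mu> l)^2);
        \<delta>W = \<bar>prob_space.expectation M (W_var n N g \<mu> X 1)\<bar>
    in measure M {\<omega> \<in> space M. U_stat n N g X \<omega> - \<theta> < - (t + \<delta>W)}
         \<le> exp (- (2 * real n * t^2) / (bW - aW)^2)"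
proof -
  interpret prob_space M by fact
  define \<mu> where "\<mu> = (\<lambda>l. expectation (\<lambda>\<omega>. g l (X 1 \<omega>)))"
  define h where "h x = 2 * (\<Sum>l\<in>{0..N}. \<mu> l * (g l x - \<mu> l) - (g l x - \<mu> l)\<^sup>2 / (real n - 1))" for x
  define mean where "mean \<omega> = (\<Sum>j\<in>{1..n}. h (X j \<omega>)) / n" for \<omega>
  define E where "E = expectation (\<lambda>\<omega>. h (X 1 \<omega>))"
  have W_h: "W_var n N g \<mu> X j = (\<lambda>\<omega>. h (X j \<omega>))" for j
    by (simp add: W_var_def h_def fun_eq_iff)
  have "1 \<in> {1..n}"
    using n2 by simp
  have h_meas: "h \<in> borel_measurable borel"
    unfolding h_def using gmeas by measurable
  have "AE \<omega> in M. h (X 1 \<omega>) \<in> {aW..bW}"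
    using Wbdd[OF \<open>1 \<in> {1..n}\<close>] unfolding \<mu>_def[symmetric] W_h by simp
  from Hoeffding_ineq_iid_comp_le[OF _ \<open>1 \<in> {1..n}\<close> indep ident h_meas this] t
  have hoeffding: "prob {\<omega> \<in> space M. mean \<omega> \<le> E - t} \<le> exp (- (2 * real n * t\<^sup>2) / (bW - aW)\<^sup>2)"
    by (simp add: mean_def E_def)
  have "mean \<omega> \<le> E - t" if "U_stat n N g X \<omega> - (\<Sum>l\<in>{0..N}. (\<mu> l)\<^sup>2) < - (t + \<bar>E\<bar>)" for \<omega>
    using sum_W_var_div_le_U_stat[OF n2, of N g \<mu> X \<omega>] that abs_ge_minus_self[of E]
    unfolding W_h mean_def by linarith
  moreover have "mean \<in> borel_measurable M"
    unfolding mean_def using measurable_compose[OF rv h_meas] by measurable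
  ultimately show ?thesis
    unfolding Let_def \<mu>_def[symmetric] W_h E_def[symmetric]
    by (intro order_trans[OF finite_measure_mono hoeffding] borel_measurable_le
        borel_measurable_const) auto
qed

end
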